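(* For every $w\in\mathbb{C}$, $$\tau|_{L_w\cap\Omega}\le\hat\omega|_{L_w\cap\Omega}\le 2e^{-\rho_1}\,\tau|_{L_w\cap\Omega},$$ as inequalities of real $(1,1)$-forms on the surface $L_w\cap\Omega$ (away from the zero section, where $e^{-\rho_1}=\infty$).
   Context: Let $E$ be the total space of $\mathcal{O}_{\mathbb{P}^1}(-1)\oplus\mathcal{O}_{\mathbb{P}^1}(-1)\to\mathbb{P}^1$, with zero section $P_0$. On the chart with inhomogeneous coordinate $z$ on $\mathbb{P}^1$ use standard fibre coordinates $(\xi_1,\xi_2)$, and define the (globally defined) functions $e^{\rho}=(1+|z|^2)(|\xi_1|^2+|\xi_2|^2)$ and $e^{\rho_1}=(1+|z|^2)|\xi_1|^2$ (the squared norms of $\xi$ and its first component for the metric $h\oplus h$, $h$ the hermitian metric on $\mathcal{O}(-1)$ with curvature $-\omega_{FS}$). Let $\omega_{FS}=\sqrt{-1}\partial\bar\partial\log(1+|z|^2)$ (pulled back to $E$), $\hat\omega=\omega_{FS}+\sqrt{-1}\partial\bar\partial e^{\rho}$ (a Kähler form on $E$), $\tau=\sqrt{-1}\partial\bar\partial e^{\rho_1}$ (a smooth closed nonnegative $(1,1)$-form), and $\Omega=\{\rho<0\}\subset E$. For $w\in\mathbb{C}$, $L_w\subset E$ is the closure of $\{\xi_2=w\xi_1\}$, a smooth surface containing $P_0$ (isomorphic to $\mathbb{C}^2$ blown up at one point). *)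

theory Defs
  imports "HOL-Analysis.Analysis"
begin

text \<open>Chart of E = O(-1)+O(-1) over the affine chart of P^1 with inhomogeneous
coordinate z and fibre coordinates (xi1, xi2).  A point is (z, xi1, xi2).\<close>

definition e_rho :: "complex \<Rightarrow> complex \<Rightarrow> complex \<Rightarrow> real" where
  "e_rho z x1 x2 = (1 + (cmod z)\<^sup>2) * ((cmod x1)\<^sup>2 + (cmod x2)\<^sup>2)"

definition e_rho1 :: "complex \<Rightarrow> complex \<Rightarrow> complex \<Rightarrow> real" where
  "e_rho1 z x1 x2 = (1 + (cmod z)\<^sup>2) * (cmod x1)\<^sup>2"

text \<open>Kaehler potential of omega_FS (pulled back to E).\<close>
definition phi_FS :: "complex \<Rightarrow> complex \<Rightarrow> complex \<Rightarrow> real" where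
  "phi_FS z x1 x2 = ln (1 + (cmod z)\<^sup>2)"

text \<open>Omega = {rho < 0} = {e^rho < 1}.\<close>
definition in_Omega :: "complex \<Rightarrow> complex \<Rightarrow> complex \<Rightarrow> bool" where
  "in_Omega z x1 x2 \<longleftrightarrow> e_rho z x1 x2 < 1"

text \<open>Holomorphic parametrisation (z, t) of L_w = {xi2 = w xi1} in this chart.\<close>
definition L_param :: "complex \<Rightarrow> complex \<Rightarrow> complex \<Rightarrow> complex \<times> complex \<times> complex" where
  "L_param w z t = (z, t, w * t)"

text \<open>Levi form (complex Hessian) of a real function f of two complex variables at
(z,t) evaluated on the tangent vector (a,b):
  sum_{j,k} f_{j kbar} v_j conj(v_k) = (1/4) * Laplacian of f along the complex line
through (z,t) in direction (a,b).  The real (1,1)-form i ddbar f is positive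
semidefinite at a point iff this is nonnegative for all (a,b).\<close>
definition levi :: "(complex \<Rightarrow> complex \<Rightarrow> real) \<Rightarrow> complex \<Rightarrow> complex \<Rightarrow> complex \<Rightarrow> complex \<Rightarrow> real" where
  "levi f z t a b =
     (deriv (deriv (\<lambda>s::real. f (z + of_real s * a) (t + of_real s * b))) 0
    + deriv (deriv (\<lambda>s::real. f (z + of_real s * \<i> * a) (t + of_real s * \<i> * b))) 0) / 4"

text \<open>Potentials of omega_hat = omega_FS + i ddbar e^rho and tau = i ddbar e^rho1,
restricted (pulled back) to L_w via the holomorphic parametrisation.\<close>
definition omega_hat_pot_L :: "complex \<Rightarrow> complex \<Rightarrow> complex \<Rightarrow> real" where
  "omega_hat_pot_L w z t =
     (case L_param w z t of (z', x1, x2) \<Rightarrow> phi_FS z' x1 x2 + e_rho z' x1 x2)"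

definition tau_pot_L :: "complex \<Rightarrow> complex \<Rightarrow> complex \<Rightarrow> real" where
  "tau_pot_L w z t = (case L_param w z t of (z', x1, x2) \<Rightarrow> e_rho1 z' x1 x2)"

end

theory Submission imports Defs begin

text \<open>On \<open>L\<^sub>w\<close>, with parameters \<open>(z, t)\<close>, \<open>e\<^sup>\<rho>\<close> is \<open>(1 + |w|\<^sup>2)\<close> times \<open>e\<^sup>\<rho>\<^sup>1 = (1 + |z|\<^sup>2)|t|\<^sup>2\<close>.
An explicit computation gives the Levi forms in direction \<open>(a, b)\<close>:
\<open>\<tau> = |b|\<^sup>2 + |zb + ta|\<^sup>2\<close> and \<open>omega_hat = |a|\<^sup>2/(1 + |z|\<^sup>2)\<^sup>2 + (1 + |w|\<^sup>2) \<tau>\<close>.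
The first inequality is then immediate.  For the second, \<open>\<Omega>\<close> gives \<open>(1 + |w|\<^sup>2) e\<^sup>\<rho>\<^sup>1 < 1\<close>,
and writing \<open>ta = (zb + ta) - zb\<close>, Cauchy-Schwarz gives \<open>|a|\<^sup>2|t|\<^sup>2 \<le> (1 + |z|\<^sup>2) \<tau>\<close>,
so each of the two summands of \<open>omega_hat\<close> is at most \<open>e\<^sup>-\<^sup>\<rho>\<^sup>1 \<tau>\<close>.\<close>

lemma deriv2_ln_quadratic_plus_quartic:
  fixes K q0 q1 q2 p0 p1 p2 p3 p4 :: real
  assumes pos: "\<And>s. q0 + q1 * s + q2 * s\<^sup>2 > 0"
  shows "deriv (deriv (\<lambda>s. K * ln (q0 + q1 * s + q2 * s\<^sup>2)
            + (p0 + p1 * s + p2 * s\<^sup>2 + p3 * s^3 + p4 * s^4))) 0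
       = K * (2 * q2 * q0 - q1\<^sup>2) / q0\<^sup>2 + 2 * p2"
proof -
  have first: "deriv (\<lambda>s. K * ln (q0 + q1 * s + q2 * s\<^sup>2)
            + (p0 + p1 * s + p2 * s\<^sup>2 + p3 * s^3 + p4 * s^4))
      = (\<lambda>s. K * ((q1 + 2 * q2 * s) / (q0 + q1 * s + q2 * s\<^sup>2))
            + (p1 + 2 * p2 * s + 3 * p3 * s\<^sup>2 + 4 * p4 * s^3))"
  proof
    fix s :: real
    show "deriv (\<lambda>s. K * ln (q0 + q1 * s + q2 * s\<^sup>2)
            + (p0 + p1 * s + p2 * s\<^sup>2 + p3 * s^3 + p4 * s^4)) s
        = K * ((q1 + 2 * q2 * s) / (q0 + q1 * s + q2 * s\<^sup>2))
            + (p1 + 2 * p2 * s + 3 * p3 * s\<^sup>2 + 4 * p4 * s^3)"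
      using pos[of s]
      by (intro DERIV_imp_deriv)
         (auto intro!: derivative_eq_intros simp: field_simps power2_eq_square power3_eq_cube)
  qed
  have "((\<lambda>s. K * ((q1 + 2 * q2 * s) / (q0 + q1 * s + q2 * s\<^sup>2))
            + (p1 + 2 * p2 * s + 3 * p3 * s\<^sup>2 + 4 * p4 * s^3))
        has_real_derivative K * (2 * q2 * q0 - q1\<^sup>2) / q0\<^sup>2 + 2 * p2) (at 0)"
    using pos[of 0]
    by (auto intro!: derivative_eq_intros simp: field_simps power2_eq_square power3_eq_cube)
  then show ?thesis
    unfolding first by (rule DERIV_imp_deriv)
qed

lemma cmod_add_scaled_power2:
  "(cmod (z + of_real s * a))\<^sup>2 = (cmod z)\<^sup>2 + 2 * Re (z * cnj a) * s + (cmod a)\<^sup>2 * s\<^sup>2"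
  by (simp only: cmod_power2) (simp add: power2_eq_square algebra_simps)

lemma Re_mult_cnj_power2_add_rotated:
  "(Re (z * cnj a))\<^sup>2 + (Re (z * cnj (\<i> * a)))\<^sup>2 = (cmod z)\<^sup>2 * (cmod a)\<^sup>2"
  by (simp only: cmod_power2) (simp add: power2_eq_square algebra_simps)

lemma cmod_mult_add_mult_power2:
  "(cmod (z * b + t * a))\<^sup>2 = (cmod z)\<^sup>2 * (cmod b)\<^sup>2 + (cmod t)\<^sup>2 * (cmod a)\<^sup>2
     + 2 * (Re (z * cnj a) * Re (t * cnj b) + Re (z * cnj (\<i> * a)) * Re (t * cnj (\<i> * b)))"
  by (simp only: cmod_power2) (simp add: power2_eq_square algebra_simps)

lemma omega_hat_pot_L_eq:
  "omega_hat_pot_L w z t = ln (1 + (cmod z)\<^sup>2) + (1 + (cmod w)\<^sup>2) * tau_pot_L w z t"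
  by (simp add: omega_hat_pot_L_def tau_pot_L_def L_param_def phi_FS_def e_rho_def e_rho1_def
      norm_mult power_mult_distrib algebra_simps)

lemma tau_pot_L_line:
  "tau_pot_L w (z + of_real s * a) (t + of_real s * b)
     = (1 + (cmod z)\<^sup>2 + 2 * Re (z * cnj a) * s + (cmod a)\<^sup>2 * s\<^sup>2)
       * ((cmod t)\<^sup>2 + 2 * Re (t * cnj b) * s + (cmod b)\<^sup>2 * s\<^sup>2)"
  by (simp add: tau_pot_L_def L_param_def e_rho1_def cmod_add_scaled_power2 add.assoc)

lemma deriv2_pots_L_line:
  fixes w z t a b :: complex
  defines "P \<equiv> (cmod z)\<^sup>2" and "X \<equiv> Re (z * cnj a)" and "A \<equiv> (cmod a)\<^sup>2"
    and "Q \<equiv> (cmod t)\<^sup>2" and "Y \<equiv> Re (t * cnj b)" and "B \<equiv> (cmod b)\<^sup>2"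
    and "c \<equiv> 1 + (cmod w)\<^sup>2"
  shows deriv2_tau_pot_L_line:
      "deriv (deriv (\<lambda>s. tau_pot_L w (z + of_real s * a) (t + of_real s * b))) 0
         = 2 * ((1 + P) * B + 4 * X * Y + A * Q)"
    and deriv2_omega_hat_pot_L_line:
      "deriv (deriv (\<lambda>s. omega_hat_pot_L w (z + of_real s * a) (t + of_real s * b))) 0
         = (2 * A * (1 + P) - (2 * X)\<^sup>2) / (1 + P)\<^sup>2 + 2 * c * ((1 + P) * B + 4 * X * Y + A * Q)"
proof -
  have pos: "1 + P + 2 * X * s + A * s\<^sup>2 > 0" for s
    using cmod_add_scaled_power2[of z s a, folded P_def X_def A_def]
    by (metis add_pos_nonneg ab_semigroup_add_class.add_ac(1) zero_less_one zero_le_power2)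
  have quartic: "tau_pot_L w (z + of_real s * a) (t + of_real s * b)
      = (1 + P) * Q + (2 * (1 + P) * Y + 2 * X * Q) * s + ((1 + P) * B + 4 * X * Y + A * Q) * s\<^sup>2
        + (2 * X * B + 2 * A * Y) * s^3 + (A * B) * s^4" for s
    unfolding tau_pot_L_line P_def X_def A_def Q_def Y_def B_def
    by (simp add: power2_eq_square power3_eq_cube power4_eq_xxxx algebra_simps)
  have tau_line: "(\<lambda>s. tau_pot_L w (z + of_real s * a) (t + of_real s * b))
      = (\<lambda>s. 0 * ln (1 + P + 2 * X * s + A * s\<^sup>2)
          + ((1 + P) * Q + (2 * (1 + P) * Y + 2 * X * Q) * s + ((1 + P) * B + 4 * X * Y + A * Q) * s\<^sup>2
             + (2 * X * B + 2 * A * Y) * s^3 + (A * B) * s^4))"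
    by (simp add: quartic)
  show "deriv (deriv (\<lambda>s. tau_pot_L w (z + of_real s * a) (t + of_real s * b))) 0
      = 2 * ((1 + P) * B + 4 * X * Y + A * Q)"
    unfolding tau_line deriv2_ln_quadratic_plus_quartic[OF pos] by simp
  have omega_hat_line: "(\<lambda>s. omega_hat_pot_L w (z + of_real s * a) (t + of_real s * b))
      = (\<lambda>s. 1 * ln (1 + P + 2 * X * s + A * s\<^sup>2)
          + (c * ((1 + P) * Q) + c * (2 * (1 + P) * Y + 2 * X * Q) * s
             + c * ((1 + P) * B + 4 * X * Y + A * Q) * s\<^sup>2
             + c * (2 * X * B + 2 * A * Y) * s^3 + c * (A * B) * s^4))"
    unfolding omega_hat_pot_L_eq quartic cmod_add_scaled_power2 P_def X_def A_def c_def
    by (simp add: algebra_simps)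
  show "deriv (deriv (\<lambda>s. omega_hat_pot_L w (z + of_real s * a) (t + of_real s * b))) 0
      = (2 * A * (1 + P) - (2 * X)\<^sup>2) / (1 + P)\<^sup>2 + 2 * c * ((1 + P) * B + 4 * X * Y + A * Q)"
    unfolding omega_hat_line deriv2_ln_quadratic_plus_quartic[OF pos] by (simp add: algebra_simps)
qed

lemma levi_rotated_direction:
  "levi f z t a b = (deriv (deriv (\<lambda>s. f (z + of_real s * a) (t + of_real s * b))) 0
      + deriv (deriv (\<lambda>s. f (z + of_real s * (\<i> * a)) (t + of_real s * (\<i> * b)))) 0) / 4"
  by (simp add: levi_def mult.assoc)

lemma levi_tau_pot_L:
  "levi (tau_pot_L w) z t a b = (cmod b)\<^sup>2 + (cmod (z * b + t * a))\<^sup>2"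
proof -
  have "cmod (\<i> * a) = cmod a" "cmod (\<i> * b) = cmod b"
    by (simp_all add: norm_mult)
  then show ?thesis
    unfolding levi_rotated_direction deriv2_tau_pot_L_line cmod_mult_add_mult_power2
    by (simp only:) (simp add: algebra_simps del: times_complex.sel)
qed

lemma levi_omega_hat_pot_L:
  "levi (omega_hat_pot_L w) z t a b
     = (cmod a)\<^sup>2 / (1 + (cmod z)\<^sup>2)\<^sup>2 + (1 + (cmod w)\<^sup>2) * levi (tau_pot_L w) z t a b"
proof -
  define P where "P = (cmod z)\<^sup>2"
  define A where "A = (cmod a)\<^sup>2"
  define X where "X = Re (z * cnj a)"
  define X' where "X' = Re (z * cnj (\<i> * a))"
  have "X\<^sup>2 + X'\<^sup>2 = P * A"
    unfolding P_def A_def X_def X'_def by (rule Re_mult_cnj_power2_add_rotated)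
  have "((2 * A * (1 + P) - (2 * X)\<^sup>2) / (1 + P)\<^sup>2
      + (2 * A * (1 + P) - (2 * X')\<^sup>2) / (1 + P)\<^sup>2) / 4
      = (4 * A * (1 + P) - 4 * (X\<^sup>2 + X'\<^sup>2)) / (4 * (1 + P)\<^sup>2)"
    by (simp add: power_mult_distrib add_divide_distrib[symmetric] algebra_simps)
  also have "\<dots> = A / (1 + P)\<^sup>2"
    unfolding \<open>X\<^sup>2 + X'\<^sup>2 = P * A\<close> by (simp add: algebra_simps)
  finally have "((2 * A * (1 + P) - (2 * X)\<^sup>2) / (1 + P)\<^sup>2
      + (2 * A * (1 + P) - (2 * X')\<^sup>2) / (1 + P)\<^sup>2) / 4 = A / (1 + P)\<^sup>2" .
  moreover have "cmod (\<i> * a) = cmod a"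
    by (simp add: norm_mult)
  ultimately show ?thesis
    unfolding levi_rotated_direction deriv2_omega_hat_pot_L_line deriv2_tau_pot_L_line
    unfolding P_def A_def X_def X'_def
    by (simp add: norm_mult algebra_simps add_divide_distrib del: times_complex.sel)
qed

lemma cmod_mult_power2_le:
  "(cmod a)\<^sup>2 * (cmod t)\<^sup>2 \<le> (1 + (cmod z)\<^sup>2) * ((cmod b)\<^sup>2 + (cmod (z * b + t * a))\<^sup>2)"
proof -
  define u where "u = z * b + t * a"
  have "cmod (t * a) \<le> cmod u + cmod z * cmod b"
    by (metis u_def add_diff_cancel_left' norm_mult norm_triangle_ineq4)
  then have "(cmod a)\<^sup>2 * (cmod t)\<^sup>2 \<le> (cmod u + cmod z * cmod b)\<^sup>2"
    by (simp add: norm_mult power_mult_distrib[symmetric] power_mono mult.commute)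
  also have "\<dots> \<le> (1 + (cmod z)\<^sup>2) * ((cmod b)\<^sup>2 + (cmod u)\<^sup>2)"
    using zero_le_power2[of "cmod z * cmod u - cmod b"]
    by (simp add: power2_eq_square algebra_simps)
  finally show ?thesis
    unfolding u_def .
qed

lemma levi_tau_pot_L_le_levi_omega_hat_pot_L:
  "levi (tau_pot_L w) z t a b \<le> levi (omega_hat_pot_L w) z t a b"
proof -
  have "levi (tau_pot_L w) z t a b \<ge> 0"
    unfolding levi_tau_pot_L by simp
  then have "levi (tau_pot_L w) z t a b \<le> (1 + (cmod w)\<^sup>2) * levi (tau_pot_L w) z t a b"
    using mult_right_mono[of 1 "1 + (cmod w)\<^sup>2"] by simp
  then show ?thesis
    unfolding levi_omega_hat_pot_L by (simp add: add_increasing)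
qed

lemma levi_omega_hat_pot_L_le:
  assumes Omega: "(1 + (cmod w)\<^sup>2) * tau_pot_L w z t < 1" and "t \<noteq> 0"
  shows "levi (omega_hat_pot_L w) z t a b \<le> 2 / tau_pot_L w z t * levi (tau_pot_L w) z t a b"
proof -
  define P where "P = (cmod z)\<^sup>2"
  define Q where "Q = (cmod t)\<^sup>2"
  define T where "T = levi (tau_pot_L w) z t a b"
  have P: "1 + P > 0"
    unfolding P_def by (simp add: add_pos_nonneg)
  have Q: "Q > 0"
    unfolding Q_def using \<open>t \<noteq> 0\<close> by simp
  have R: "tau_pot_L w z t = (1 + P) * Q" "(1 + P) * Q > 0"
    using P Q by (simp_all add: P_def Q_def tau_pot_L_def L_param_def e_rho1_def)
  have T: "T \<ge> 0"
    unfolding T_def levi_tau_pot_L by simp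
  have "(1 + (cmod w)\<^sup>2) * T \<le> T / ((1 + P) * Q)"
    using Omega T R by (simp add: pos_le_divide_eq mult.commute mult.left_commute mult_left_le)
  moreover have "(cmod a)\<^sup>2 / (1 + P)\<^sup>2 \<le> T / ((1 + P) * Q)"
  proof -
    have "(cmod a)\<^sup>2 / (1 + P)\<^sup>2 = (cmod a)\<^sup>2 * Q / ((1 + P) * ((1 + P) * Q))"
      using P Q by (simp add: power2_eq_square)
    also have "\<dots> \<le> (1 + P) * T / ((1 + P) * ((1 + P) * Q))"
      using cmod_mult_power2_le[of a t z b] R P
      by (intro divide_right_mono) (simp_all add: P_def Q_def T_def levi_tau_pot_L)
    finally show ?thesis
      using P by simp
  qed
  ultimately show ?thesis
    unfolding levi_omega_hat_pot_L R(1) by (simp flip: T_def P_def)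
qed

lemma in_Omega_L_param_iff:
  "(case L_param w z t of (z', x1, x2) \<Rightarrow> in_Omega z' x1 x2)
     \<longleftrightarrow> (1 + (cmod w)\<^sup>2) * tau_pot_L w z t < 1"
  by (simp add: L_param_def in_Omega_def e_rho_def tau_pot_L_def e_rho1_def
      norm_mult power_mult_distrib algebra_simps)

lemma exp_neg_ln_e_rho1_L_param:
  assumes "t \<noteq> 0"
  shows "(case L_param w z t of (z', x1, x2) \<Rightarrow> exp (- ln (e_rho1 z' x1 x2))) = 1 / tau_pot_L w z t"
proof -
  have "tau_pot_L w z t > 0"
    using assms by (simp add: tau_pot_L_def L_param_def e_rho1_def add_pos_nonneg)
  then show ?thesis
    by (simp add: tau_pot_L_def L_param_def exp_minus inverse_eq_divide)
qed

theorem lemma3p4: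
  fixes w z t a b :: complex
  assumes "case L_param w z t of (z', x1, x2) \<Rightarrow> in_Omega z' x1 x2"
  shows "levi (tau_pot_L w) z t a b \<le> levi (omega_hat_pot_L w) z t a b
       \<and> (t \<noteq> 0 \<longrightarrow>
          levi (omega_hat_pot_L w) z t a b
            \<le> 2 * (case L_param w z t of (z', x1, x2) \<Rightarrow> exp (- ln (e_rho1 z' x1 x2)))
                * levi (tau_pot_L w) z t a b)"
  using levi_tau_pot_L_le_levi_omega_hat_pot_L
    levi_omega_hat_pot_L_le[OF assms[unfolded in_Omega_L_param_iff]]
    exp_neg_ln_e_rho1_L_param
  by simp

end
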